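(* Let $q\in[0,1)$ and let $\mathfrak M$ be an $N$-dimensional space of $\mathbb C^n$-valued functions analytic in a neighbourhood of the origin which is invariant under $R_q$. Let $F$ be a $\mathbb C^{n\times N}$-valued function whose columns form a basis of $\mathfrak M$, and put $C=F(0)\in\mathbb C^{n\times N}$. Then there exists a matrix $A_q\in\mathbb C^{N\times N}$ such that, for $z$ in a neighbourhood of the origin, \[ F(z)=C\prod_{j=0}^\infty \bigl(I_N-(1-q)zq^jA_q\bigr)^{-1}. \]
   Context: For $q\in(0,1)$, $R_q$ is the $q$-Jackson derivative $(R_qf)(z)=\frac{f(z)-f(qz)}{(1-q)z}$ (extended at $z=0$ by continuity); for $q=0$, $R_0$ is the backward shift $(R_0f)(z)=\frac{f(z)-f(0)}{z}$ for $z\neq0$, $(R_0f)(0)=f'(0)$. The operator acts entrywise on vector/matrix-valued functions. Convention $q^0=1$ (so for $q=0$ the product reduces to $(I_N-zA_q)^{-1}$). All factors of the product commute. *)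

theory Defs
  imports "HOL-Analysis.Analysis"
begin

text \<open>The operator R_q on scalar functions: q-Jackson derivative for q in (0,1),
  backward shift for q = 0; at z = 0 extended by continuity (value f'(0)).\<close>
definition jackson_R :: "real \<Rightarrow> (complex \<Rightarrow> complex) \<Rightarrow> complex \<Rightarrow> complex" where
  "jackson_R q f z =
     (if z = 0 then deriv f 0
      else (f z - f (complex_of_real q * z)) / ((1 - complex_of_real q) * z))"

definition jackson_R_vec :: "real \<Rightarrow> (complex \<Rightarrow> complex ^'n) \<Rightarrow> complex \<Rightarrow> complex ^'n" where
  "jackson_R_vec q f z = (\<chi> i. jackson_R q (\<lambda>w. f w $ i) z)"

fun qprod_partial :: "real \<Rightarrow> complex ^'N^'N \<Rightarrow> complex \<Rightarrow> nat \<Rightarrow> complex ^'N^'N" where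
  "qprod_partial q A z 0 = mat 1"
| "qprod_partial q A z (Suc m) =
     qprod_partial q A z m **
     matrix_inv (mat 1 - mat ((1 - complex_of_real q) * z * complex_of_real q ^ m) ** A)"

end

theory Submission
  imports Defs
begin

text \<open>Invariance under \<open>R\<^sub>q\<close> means \<open>R\<^sub>q F = F A\<close> for a coefficient matrix \<open>A\<close>, which
  unwinds to the functional equation \<open>F (q z) = F z (I - (1 - q) z A)\<close>. Iterating it, \<open>F z\<close> is
  \<open>F (q\<^sup>m z)\<close> times the product of the first \<open>m\<close> inverse factors; these are all functions
  of \<open>A\<close> and hence commute. For small \<open>z\<close> the factors are perturbations of \<open>I\<close> whose size
  decays geometrically, so the partial products converge (Neumann series plus a discrete
  Gronwall bound), while \<open>F (q\<^sup>m z) \<rightarrow> F 0\<close> by continuity.\<close>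

section \<open>An entrywise matrix norm, and inverses of perturbed identities\<close>

definition mat_l1_norm :: "'a::real_normed_vector^'m^'n \<Rightarrow> real" where
  "mat_l1_norm X = (\<Sum>i\<in>UNIV. \<Sum>j\<in>UNIV. norm (X $ i $ j))"

definition vec_l1_norm :: "'a::real_normed_vector^'n \<Rightarrow> real" where
  "vec_l1_norm v = (\<Sum>i\<in>UNIV. norm (v $ i))"

lemma mat_l1_norm_nonneg: "mat_l1_norm X \<ge> 0"
  unfolding mat_l1_norm_def by (intro sum_nonneg norm_ge_zero)

lemma vec_l1_norm_nonneg: "vec_l1_norm v \<ge> 0"
  unfolding vec_l1_norm_def by (intro sum_nonneg norm_ge_zero)

lemma vec_l1_norm_eq_0_iff: "vec_l1_norm v = 0 \<longleftrightarrow> v = 0"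
  unfolding vec_l1_norm_def by (simp add: sum_nonneg_eq_0_iff vec_eq_iff)

lemma row_l1_norm_le_mat_l1_norm: "(\<Sum>j\<in>UNIV. norm (X $ i $ j)) \<le> mat_l1_norm X"
  unfolding mat_l1_norm_def by (rule member_le_sum) (auto intro: sum_nonneg)

lemma norm_le_mat_l1_norm: "norm X \<le> mat_l1_norm X"
proof -
  have "norm X \<le> (\<Sum>i\<in>UNIV. norm (X $ i))"
    unfolding norm_vec_def by (rule L2_set_le_sum) auto
  also have "\<dots> \<le> mat_l1_norm X"
    unfolding mat_l1_norm_def norm_vec_def by (intro sum_mono L2_set_le_sum) auto
  finally show ?thesis .
qed

lemma mat_l1_norm_triangle: "mat_l1_norm (X + Y) \<le> mat_l1_norm X + mat_l1_norm Y"
  unfolding mat_l1_norm_def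
  by (simp add: sum.distrib[symmetric] sum_mono norm_triangle_ineq)

lemma mat_l1_norm_mat_1: "mat_l1_norm (mat 1 :: 'a::real_normed_algebra_1^'n^'n) = CARD('n)"
  by (simp add: mat_l1_norm_def mat_def if_distrib cong: if_cong)

lemma mat_l1_norm_mult:
  fixes X :: "'a::real_normed_div_algebra^'m^'n" and Y :: "'a^'p^'m"
  shows "mat_l1_norm (X ** Y) \<le> mat_l1_norm X * mat_l1_norm Y"
proof -
  have "mat_l1_norm (X ** Y) \<le> (\<Sum>i\<in>UNIV. \<Sum>k\<in>UNIV. \<Sum>j\<in>UNIV. norm (X$i$j) * norm (Y$j$k))"
    unfolding mat_l1_norm_def matrix_matrix_mult_def vec_lambda_beta
    by (intro sum_mono order_trans[OF norm_sum]) (simp add: norm_mult)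
  also have "\<dots> = (\<Sum>i\<in>UNIV. \<Sum>j\<in>UNIV. norm (X$i$j) * (\<Sum>k\<in>UNIV. norm (Y$j$k)))"
    unfolding sum_distrib_left by (intro sum.cong refl sum.swap)
  also have "\<dots> \<le> (\<Sum>i\<in>UNIV. \<Sum>j\<in>UNIV. norm (X$i$j) * mat_l1_norm Y)"
    by (intro sum_mono mult_left_mono row_l1_norm_le_mat_l1_norm) auto
  also have "\<dots> = mat_l1_norm X * mat_l1_norm Y"
    by (simp add: mat_l1_norm_def sum_distrib_right)
  finally show ?thesis .
qed

lemma vec_l1_norm_matrix_vector_mult:
  fixes X :: "'a::real_normed_div_algebra^'m^'n"
  shows "vec_l1_norm (X *v y) \<le> mat_l1_norm X * vec_l1_norm y"
proof -
  have "vec_l1_norm (X *v y) \<le> (\<Sum>i\<in>UNIV. \<Sum>j\<in>UNIV. norm (X$i$j) * norm (y$j))"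
    unfolding vec_l1_norm_def matrix_vector_mult_def vec_lambda_beta
    by (intro sum_mono order_trans[OF norm_sum]) (simp add: norm_mult)
  also have "\<dots> \<le> (\<Sum>i\<in>UNIV. \<Sum>j\<in>UNIV. norm (X$i$j) * vec_l1_norm y)"
    unfolding vec_l1_norm_def by (intro sum_mono mult_left_mono member_le_sum) auto
  also have "\<dots> = mat_l1_norm X * vec_l1_norm y"
    by (simp add: mat_l1_norm_def sum_distrib_right)
  finally show ?thesis .
qed

lemma mat_matrix_mult_nth: "(mat a ** A) $ i $ j = a * A $ i $ j"
  by (simp add: matrix_matrix_mult_def mat_def if_distrib if_distribR cong: if_cong)

lemma matrix_mat_mult_nth: "(A ** mat a) $ i $ j = A $ i $ j * a"
  by (simp add: matrix_matrix_mult_def mat_def if_distrib if_distribR cong: if_cong)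

lemma mat_l1_norm_mat_mult:
  "mat_l1_norm (mat a ** (A :: 'a::real_normed_div_algebra^'m^'n)) = norm a * mat_l1_norm A"
  by (simp add: mat_l1_norm_def mat_matrix_mult_nth norm_mult sum_distrib_left)

lemma matrix_diff_ldistrib: "(C :: 'a::ring_1^'m^'n) ** (A - B) = C ** A - C ** B"
  by (simp add: matrix_matrix_mult_def vec_eq_iff sum_subtractf algebra_simps)

lemma matrix_diff_rdistrib: "((A :: 'a::ring_1^'m^'n) - B) ** C = A ** C - B ** C"
  by (simp add: matrix_matrix_mult_def vec_eq_iff sum_subtractf algebra_simps)

lemma matrix_inv:
  assumes "invertible A"
  shows "A ** matrix_inv A = mat 1" "matrix_inv A ** A = mat 1"
proof -
  from assms obtain B where "A ** B = mat 1 \<and> B ** A = mat 1"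
    unfolding invertible_def by blast
  then have "A ** matrix_inv A = mat 1 \<and> matrix_inv A ** A = mat 1"
    unfolding matrix_inv_def by (rule someI)
  then show "A ** matrix_inv A = mat 1" "matrix_inv A ** A = mat 1" by auto
qed

lemma matrix_inv_commute:
  fixes A B :: "'a::comm_ring_1^'n^'n"
  assumes "invertible A" and "B ** A = A ** B"
  shows "B ** matrix_inv A = matrix_inv A ** B"
proof -
  have "matrix_inv A ** B = matrix_inv A ** B ** (A ** matrix_inv A)"
    by (simp add: matrix_inv[OF assms(1)])
  also have "\<dots> = matrix_inv A ** (B ** A) ** matrix_inv A"
    by (simp add: matrix_mul_assoc)
  also have "\<dots> = (matrix_inv A ** A) ** B ** matrix_inv A"
    by (simp add: assms(2) matrix_mul_assoc)
  finally show ?thesis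
    by (simp add: matrix_inv[OF assms(1)])
qed

lemma invertible_mat_1_minus:
  fixes X :: "'a::real_normed_field^'n^'n"
  assumes "mat_l1_norm X < 1"
  shows "invertible (mat 1 - X)"
  unfolding invertible_left_inverse matrix_left_invertible_ker
proof (intro allI impI)
  fix y :: "'a^'n"
  assume "(mat 1 - X) *v y = 0"
  then have "y = X *v y"
    by (simp add: matrix_vector_mult_diff_rdistrib)
  then have "vec_l1_norm y \<le> mat_l1_norm X * vec_l1_norm y"
    by (metis vec_l1_norm_matrix_vector_mult)
  then have "(1 - mat_l1_norm X) * vec_l1_norm y \<le> 0"
    by (simp add: algebra_simps)
  with assms vec_l1_norm_nonneg[of y] have "vec_l1_norm y = 0"
    by (simp add: mult_le_0_iff)
  then show "y = 0"
    by (simp add: vec_l1_norm_eq_0_iff)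
qed

lemma mat_l1_norm_matrix_inv_mat_1_minus:
  fixes X :: "'a::real_normed_field^'n^'n"
  assumes "mat_l1_norm X < 1"
  shows "mat_l1_norm (matrix_inv (mat 1 - X)) \<le> CARD('n) / (1 - mat_l1_norm X)"
proof -
  define Y where "Y = matrix_inv (mat 1 - X)"
  have "Y - X ** Y = mat 1"
    using matrix_inv(1)[OF invertible_mat_1_minus[OF assms]]
    by (simp add: Y_def matrix_diff_rdistrib)
  then have "Y = mat 1 + X ** Y"
    by (metis diff_add_cancel)
  then have "mat_l1_norm Y \<le> mat_l1_norm (mat 1 :: 'a^'n^'n) + mat_l1_norm (X ** Y)"
    by (metis mat_l1_norm_triangle)
  also have "\<dots> \<le> CARD('n) + mat_l1_norm X * mat_l1_norm Y"
    by (simp add: mat_l1_norm_mat_1 mat_l1_norm_mult)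
  finally have "mat_l1_norm Y \<le> CARD('n) + mat_l1_norm X * mat_l1_norm Y" .
  with assms show ?thesis
    by (simp add: Y_def[symmetric] pos_le_divide_eq algebra_simps)
qed

lemma mat_l1_norm_mult_matrix_inv_mat_1_minus_diff:
  fixes X P :: "'a::real_normed_field^'n^'n"
  assumes "mat_l1_norm X < 1"
  shows "mat_l1_norm (P ** matrix_inv (mat 1 - X) - P)
           \<le> mat_l1_norm P * mat_l1_norm X * (CARD('n) / (1 - mat_l1_norm X))"
proof -
  define Y where "Y = matrix_inv (mat 1 - X)"
  have "Y - X ** Y = mat 1"
    using matrix_inv(1)[OF invertible_mat_1_minus[OF assms]]
    by (simp add: Y_def matrix_diff_rdistrib)
  then have "Y = mat 1 + X ** Y"
    by (metis diff_add_cancel)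
  then have "P ** Y - P = P ** (X ** Y)"
    by (metis add_diff_cancel_left' matrix_add_ldistrib matrix_mul_rid)
  then have "mat_l1_norm (P ** Y - P) \<le> mat_l1_norm P * mat_l1_norm (X ** Y)"
    by (simp add: mat_l1_norm_mult)
  also have "\<dots> \<le> mat_l1_norm P * (mat_l1_norm X * mat_l1_norm Y)"
    by (intro mult_left_mono mat_l1_norm_mult mat_l1_norm_nonneg)
  also have "\<dots> \<le> mat_l1_norm P * (mat_l1_norm X * (CARD('n) / (1 - mat_l1_norm X)))"
    using mat_l1_norm_matrix_inv_mat_1_minus[OF assms]
    by (intro mult_left_mono mat_l1_norm_nonneg) (simp_all add: Y_def mat_l1_norm_nonneg)
  finally show ?thesis
    by (simp add: Y_def mult.assoc)
qed

section \<open>Convergent products of inverses\<close>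

lemma convergent_if_summable_increments:
  fixes f :: "nat \<Rightarrow> 'a::real_normed_vector"
  assumes "summable (\<lambda>n. f (Suc n) - f n)"
  shows "convergent f"
proof -
  have "(\<lambda>m. f 0 + (\<Sum>n<m. f (Suc n) - f n)) \<longlonglongrightarrow> f 0 + (\<Sum>n. f (Suc n) - f n)"
    by (intro tendsto_add tendsto_const summable_LIMSEQ assms)
  then show ?thesis
    by (simp add: sum_lessThan_telescope convergentI)
qed

lemma discrete_gronwall:
  fixes a b :: "nat \<Rightarrow> real"
  assumes step: "\<And>m. a (Suc m) \<le> a m * (1 + b m)"
    and b: "\<And>m. b m \<ge> 0" and a0: "a 0 \<ge> 0"
  shows "a m \<le> a 0 * exp (\<Sum>j<m. b j)"
proof (induction m)
  case (Suc m)
  have "a (Suc m) \<le> a 0 * exp (\<Sum>j<m. b j) * (1 + b m)"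
    using Suc b[of m] by (intro order_trans[OF step] mult_right_mono) auto
  also have "\<dots> \<le> a 0 * exp (\<Sum>j<m. b j) * exp (b m)"
    using a0 by (intro mult_left_mono) (simp_all add: exp_ge_add_one_self)
  finally show ?case
    by (simp add: exp_add mult.assoc)
qed simp

lemma convergent_products_of_inverses:
  fixes X P :: "nat \<Rightarrow> 'a::{real_normed_field,banach}^'n^'n"
  assumes small: "\<And>m. mat_l1_norm (X m) \<le> 1/2"
    and summable: "summable (\<lambda>m. mat_l1_norm (X m))"
    and P_Suc: "\<And>m. P (Suc m) = P m ** matrix_inv (mat 1 - X m)"
  shows "convergent P"
proof -
  define c where "c = 2 * real CARD('n)"
  have c: "c \<ge> 0"
    by (simp add: c_def)
  have increment: "mat_l1_norm (P (Suc m) - P m) \<le> mat_l1_norm (P m) * (c * mat_l1_norm (X m))" for m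
  proof -
    have "mat_l1_norm (X m) < 1"
      using small[of m] by linarith
    then have "mat_l1_norm (P (Suc m) - P m)
        \<le> mat_l1_norm (P m) * mat_l1_norm (X m) * (CARD('n) / (1 - mat_l1_norm (X m)))"
      unfolding P_Suc by (rule mat_l1_norm_mult_matrix_inv_mat_1_minus_diff)
    also have "\<dots> \<le> mat_l1_norm (P m) * mat_l1_norm (X m) * c"
      using small[of m] by (intro mult_left_mono mult_nonneg_nonneg mat_l1_norm_nonneg)
        (simp add: c_def divide_le_eq algebra_simps)
    finally show ?thesis
      by (simp add: mult_ac)
  qed
  define B where "B = mat_l1_norm (P 0) * exp (c * (\<Sum>m. mat_l1_norm (X m)))"
  have bounded: "mat_l1_norm (P m) \<le> B" for m
  proof -
    have "mat_l1_norm (P (Suc m)) \<le> mat_l1_norm (P m) * (1 + c * mat_l1_norm (X m))" for m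
      using mat_l1_norm_triangle[of "P m" "P (Suc m) - P m"] increment[of m]
      by (simp add: algebra_simps)
    then have "mat_l1_norm (P m) \<le> mat_l1_norm (P 0) * exp (\<Sum>j<m. c * mat_l1_norm (X j))"
      by (rule discrete_gronwall) (simp_all add: c mat_l1_norm_nonneg)
    also have "\<dots> \<le> B"
      unfolding B_def sum_distrib_left[symmetric]
      by (intro mult_left_mono mat_l1_norm_nonneg exp_mono mult_left_mono[OF _ c]
          sum_le_suminf summable) (simp_all add: mat_l1_norm_nonneg)
    finally show ?thesis .
  qed
  have "norm (P (Suc m) - P m) \<le> B * c * mat_l1_norm (X m)" for m
    using norm_le_mat_l1_norm[of "P (Suc m) - P m"] increment[of m]
      mult_right_mono[OF bounded[of m], of "c * mat_l1_norm (X m)"] c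
    by (simp add: mat_l1_norm_nonneg mult.assoc)
  then have "summable (\<lambda>m. P (Suc m) - P m)"
    by (intro summable_comparison_test'[OF summable_mult[OF summable, of "B * c"]])
  then show ?thesis
    by (rule convergent_if_summable_increments)
qed

section \<open>The \<open>q\<close>-product\<close>

lemma matrix_mat_mult_commute: "(X :: 'a::comm_semiring_1^'n^'n) ** mat w = mat w ** X"
  by (simp add: vec_eq_iff mat_matrix_mult_nth matrix_mat_mult_nth mult.commute)

lemma commute_mat_1_minus_mat_mult:
  fixes A B :: "'a::comm_ring_1^'n^'n"
  assumes "B ** A = A ** B"
  shows "B ** (mat 1 - mat w ** A) = (mat 1 - mat w ** A) ** B"
proof -
  have "B ** (mat w ** A) = mat w ** (B ** A)"
    by (simp add: matrix_mul_assoc matrix_mat_mult_commute)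
  also have "\<dots> = (mat w ** A) ** B"
    by (simp add: assms matrix_mul_assoc)
  finally show ?thesis
    by (simp add: matrix_diff_ldistrib matrix_diff_rdistrib)
qed

lemma tendsto_matrix_mult:
  fixes f :: "'b \<Rightarrow> 'a::real_normed_algebra_1^'m^'n" and g :: "'b \<Rightarrow> 'a^'p^'m"
  assumes "(f \<longlongrightarrow> a) F" and "(g \<longlongrightarrow> b) F"
  shows "((\<lambda>x. f x ** g x) \<longlongrightarrow> a ** b) F"
  unfolding matrix_matrix_mult_def
  by (intro tendsto_vec_lambda tendsto_sum tendsto_mult tendsto_vec_nth assms)

definition q_factor :: "real \<Rightarrow> complex^'N^'N \<Rightarrow> complex \<Rightarrow> nat \<Rightarrow> complex^'N^'N" where
  "q_factor q A z j = mat 1 - mat ((1 - complex_of_real q) * z * complex_of_real q ^ j) ** A"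

lemma qprod_partial_Suc_q_factor:
  "qprod_partial q A z (Suc m) = qprod_partial q A z m ** matrix_inv (q_factor q A z m)"
  by (simp add: q_factor_def)

lemma qprod_partial_commute:
  assumes "B ** A = A ** B" and "\<And>j. invertible (q_factor q A z j)"
  shows "qprod_partial q A z m ** B = B ** qprod_partial q A z m"
proof (induction m)
  case (Suc m)
  have "B ** matrix_inv (q_factor q A z m) = matrix_inv (q_factor q A z m) ** B"
    using assms unfolding q_factor_def
    by (intro matrix_inv_commute commute_mat_1_minus_mat_mult) auto
  with Suc show ?case
    by (metis qprod_partial_Suc_q_factor matrix_mul_assoc)
qed simp

lemma q_shift_iterate:
  fixes F :: "complex \<Rightarrow> complex^'N^'n"
  assumes q: "0 \<le> q" "q \<le> 1"
    and shift: "\<And>w. norm w \<le> norm z \<Longrightarrow>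
      F (complex_of_real q * w) = F w ** (mat 1 - mat ((1 - complex_of_real q) * w) ** A)"
    and inv: "\<And>j. invertible (q_factor q A z j)"
  shows "F z = F (complex_of_real q ^ m * z) ** qprod_partial q A z m"
proof (induction m)
  case (Suc m)
  define w where "w = complex_of_real q ^ m * z"
  define M where "M = q_factor q A z m"
  have "norm w \<le> norm z"
    using q by (simp add: w_def norm_mult norm_power mult_left_le_one_le power_le_one)
  then have "F (complex_of_real q ^ Suc m * z) = F w ** M"
    using shift[of w] by (simp add: w_def M_def q_factor_def mult_ac)
  then have "F w = F (complex_of_real q ^ Suc m * z) ** matrix_inv M"
    by (simp add: M_def inv matrix_inv matrix_mul_assoc[symmetric])
  moreover have "qprod_partial q A z m ** M = M ** qprod_partial q A z m"
    unfolding M_def q_factor_def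
    by (intro commute_mat_1_minus_mat_mult qprod_partial_commute inv) simp
  then have "matrix_inv M ** qprod_partial q A z m = qprod_partial q A z (Suc m)"
    by (simp only: M_def qprod_partial_Suc_q_factor matrix_inv_commute inv)
  ultimately show ?case
    using Suc by (simp only: w_def matrix_mul_assoc[symmetric])
qed simp

lemma qprod_partial_convergent:
  assumes q: "0 \<le> q" "q < 1" and z: "norm z * mat_l1_norm A \<le> 1/2"
  shows "invertible (q_factor q A z m)" and "convergent (qprod_partial q A z)"
proof -
  define X where "X j = mat ((1 - complex_of_real q) * z * complex_of_real q ^ j) ** A" for j
  have norm_X: "mat_l1_norm (X j) = (1 - q) * norm z * mat_l1_norm A * q ^ j" for j
  proof -
    have "norm (1 - complex_of_real q) = 1 - q"
      using q by (metis abs_of_nonneg diff_ge_0_iff_ge less_imp_le norm_of_real of_real_1 of_real_diff)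
    then show ?thesis
      using q by (simp add: X_def mat_l1_norm_mat_mult norm_mult norm_power mult_ac)
  qed
  have small: "mat_l1_norm (X j) \<le> 1/2" for j
  proof -
    have "(1 - q) * q ^ j \<le> 1"
      using q by (intro mult_le_one power_le_one) simp_all
    then have "(1 - q) * q ^ j * (norm z * mat_l1_norm A) \<le> 1 * (norm z * mat_l1_norm A)"
      by (intro mult_right_mono) (simp_all add: mat_l1_norm_nonneg)
    then have "mat_l1_norm (X j) \<le> norm z * mat_l1_norm A"
      by (simp add: norm_X mult_ac)
    with z show ?thesis by linarith
  qed
  show "invertible (q_factor q A z m)"
    unfolding q_factor_def X_def[symmetric] using small[of m] by (intro invertible_mat_1_minus) simp
  have "summable (\<lambda>j. mat_l1_norm (X j))"
    unfolding norm_X using q by (intro summable_mult summable_geometric) simp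
  with small show "convergent (qprod_partial q A z)"
    by (rule convergent_products_of_inverses) (simp add: X_def)
qed

lemma jackson_R_vec_invariance_q_shift:
  fixes F :: "complex \<Rightarrow> complex^'N^'n" and A :: "complex^'N^'N"
  assumes "q \<noteq> 1"
    and R: "\<And>k. jackson_R_vec q (\<lambda>w. \<chi> i. F w $ i $ k) z = (\<chi> i. \<Sum>j\<in>UNIV. A $ j $ k * F z $ i $ j)"
  shows "F (complex_of_real q * z) = F z ** (mat 1 - mat ((1 - complex_of_real q) * z) ** A)"
proof (cases "z = 0")
  case False
  define c where "c = (1 - complex_of_real q) * z"
  have "c \<noteq> 0"
    using False assms(1) by (simp add: c_def)
  have entry: "F (complex_of_real q * z) $ i $ k = F z $ i $ k - c * (\<Sum>j\<in>UNIV. A $ j $ k * F z $ i $ j)"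
    for i k
  proof -
    have "jackson_R q (\<lambda>w. F w $ i $ k) z = (\<Sum>j\<in>UNIV. A $ j $ k * F z $ i $ j)"
      using arg_cong[OF R[of k], of "\<lambda>v. v $ i"] by (simp add: jackson_R_vec_def)
    then have "(F z $ i $ k - F (complex_of_real q * z) $ i $ k) / c = (\<Sum>j\<in>UNIV. A $ j $ k * F z $ i $ j)"
      using False by (simp add: jackson_R_def c_def)
    then show ?thesis
      using \<open>c \<noteq> 0\<close> by (simp add: field_simps)
  qed
  have "(F z ** (mat c ** A)) $ i $ k = c * (\<Sum>j\<in>UNIV. A $ j $ k * F z $ i $ j)" for i k
    unfolding matrix_matrix_mult_def[of "F z"] vec_lambda_beta mat_matrix_mult_nth
    by (simp add: sum_distrib_left mult_ac)
  then have "F z ** (mat 1 - mat c ** A) = F (complex_of_real q * z)"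
    by (simp add: vec_eq_iff matrix_diff_ldistrib entry)
  then show ?thesis
    by (simp add: c_def)
qed simp

lemma q_product_representation:
  fixes F :: "complex \<Rightarrow> complex^'N^'n"
  assumes q: "0 \<le> q" "q < 1" and r: "r > 0" and cont: "isCont F 0"
    and shift: "\<And>w. w \<in> ball 0 r \<Longrightarrow>
      F (complex_of_real q * w) = F w ** (mat 1 - mat ((1 - complex_of_real q) * w) ** A)"
  shows "\<exists>\<epsilon>>0. \<forall>z\<in>ball 0 \<epsilon>. (\<forall>m. invertible (q_factor q A z m)) \<and>
           (\<exists>P. qprod_partial q A z \<longlonglongrightarrow> P \<and> F z = F 0 ** P)"
proof -
  define \<epsilon> where "\<epsilon> = min r (1 / (2 * (mat_l1_norm A + 1)))"
  have "\<epsilon> > 0"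
    using r mat_l1_norm_nonneg[of A] by (simp add: \<epsilon>_def)
  moreover have "(\<forall>m. invertible (q_factor q A z m)) \<and> (\<exists>P. qprod_partial q A z \<longlonglongrightarrow> P \<and> F z = F 0 ** P)"
    if z: "z \<in> ball 0 \<epsilon>" for z
  proof -
    have "norm z * mat_l1_norm A \<le> norm z * (mat_l1_norm A + 1)"
      by (intro mult_left_mono) simp_all
    also have "\<dots> \<le> 1/2"
      using z mat_l1_norm_nonneg[of A] by (simp add: \<epsilon>_def field_simps)
    finally have small: "norm z * mat_l1_norm A \<le> 1/2" .
    note product = qprod_partial_convergent[OF q small]
    then obtain P where P: "qprod_partial q A z \<longlonglongrightarrow> P"
      by (auto simp: convergent_def)
    have "F z = F (complex_of_real q ^ m * z) ** qprod_partial q A z m" for m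
      using q z product(1) by (intro q_shift_iterate shift) (auto simp: \<epsilon>_def)
    moreover have "(\<lambda>m. F (complex_of_real q ^ m * z) ** qprod_partial q A z m) \<longlonglongrightarrow> F 0 ** P"
      using q by (intro tendsto_matrix_mult P isCont_tendsto_compose[OF cont]
          tendsto_mult_left_zero LIMSEQ_power_zero) simp
    ultimately have "F z = F 0 ** P"
      by (simp add: LIMSEQ_const_iff)
    with product(1) P show ?thesis
      by blast
  qed
  ultimately show ?thesis
    by blast
qed

theorem proposition2p2:
  fixes q :: real and r :: real
    and F :: "complex \<Rightarrow> complex ^'N ^'n"
  assumes q: "0 \<le> q" "q < 1"
    and r: "r > 0"
    and analytic: "\<And>i k. (\<lambda>z. F z $ i $ k) analytic_on ball 0 r"
    and basis_indep: "\<And>c :: complex ^'N.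
           (\<forall>z\<in>ball 0 r. (\<chi> i. \<Sum>k\<in>UNIV. c $ k * F z $ i $ k) = 0) \<Longrightarrow> c = 0"
    and invariant: "\<And>k. \<exists>c :: complex ^'N. \<forall>z\<in>ball 0 r.
           jackson_R_vec q (\<lambda>w. \<chi> i. F w $ i $ k) z = (\<chi> i. \<Sum>j\<in>UNIV. c $ j * F z $ i $ j)"
  shows "\<exists>A :: complex ^'N ^'N. \<exists>\<epsilon> > 0. \<forall>z\<in>ball 0 \<epsilon>.
           (\<forall>m. invertible (mat 1 - mat ((1 - complex_of_real q) * z * complex_of_real q ^ m) ** A)) \<and>
           (\<exists>P. qprod_partial q A z \<longlonglongrightarrow> P \<and> F z = F 0 ** P)"
proof -
  have "\<forall>k. \<exists>c :: complex^'N. \<forall>z\<in>ball 0 r.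
      jackson_R_vec q (\<lambda>w. \<chi> i. F w $ i $ k) z = (\<chi> i. \<Sum>j\<in>UNIV. c $ j * F z $ i $ j)"
    using invariant by blast
  from choice[OF this] obtain c :: "'N \<Rightarrow> complex^'N" where c: "\<forall>k. \<forall>z\<in>ball 0 r.
      jackson_R_vec q (\<lambda>w. \<chi> i. F w $ i $ k) z = (\<chi> i. \<Sum>j\<in>UNIV. c k $ j * F z $ i $ j)"
    by blast
  define A :: "complex^'N^'N" where "A = (\<chi> j k. c k $ j)"
  have shift: "F (complex_of_real q * w) = F w ** (mat 1 - mat ((1 - complex_of_real q) * w) ** A)"
    if "w \<in> ball 0 r" for w
    using q that by (intro jackson_R_vec_invariance_q_shift) (simp_all add: A_def c)
  have entries_continuous: "isCont (\<lambda>z. F z $ i $ k) 0" for i k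
    using analytic_on_imp_differentiable_at[OF analytic] r
    by (intro field_differentiable_imp_continuous_at) auto
  have "isCont F 0"
    unfolding isCont_def
    by (rule vec_tendstoI, rule vec_tendstoI, rule entries_continuous[unfolded isCont_def])
  from q_product_representation[OF q r this shift] show ?thesis
    unfolding q_factor_def by (rule exI[of _ A])
qed

end
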